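(* Let $D=(V,A)$ be a directed graph with source $s\in V$, sink $t\in V$, capacities $u\in\mathbb{R}_+^A$, interdiction costs $c\in\mathbb{R}_+^A$, and interdictor budget $B_I\ge 0$, and assume at least one arc has positive interdiction cost. For each arc $f\in A$ with $c_f>0$, let $x^{(f)}$ be an optimal solution of the linear program $[\mathrm{LP}_{\mathrm{flow}}(f)]$ (defined in the context), and let $f^*$ be an arc for which the optimal objective value of $[\mathrm{LP}_{\mathrm{flow}}(f^* )]$ is largest. Then $x^{(f^* )}$ is an optimal strategy for the flow player, i.e. $x^{(f^* )}\in\arg\max_{x\in X}\min_{z\in\Omega}\mathrm{val}(x,z)$.
   Context: $\mathcal{P}$ is the set of all $s$-$t$-paths in $D$ (a path is identified with its arc set). The flow player's strategies are the feasible path flows $X=\{x\in\mathbb{R}_+^{\mathcal{P}}:\sum_{P\in\mathcal{P}:e\in P}x_P\le u_e\ \forall e\in A\}$. After the flow player chooses $x$, the interdictor chooses $z\in\Omega=\{z\in\mathbb{R}_+^{A\times\mathcal{P}}:\sum_{e\in A}c_e\sum_{P\in\mathcal{P}:e\in P}z_{e,P}\le B_I\}$ ($z_{e,P}$ is the amount of flow stolen from path $P$ at arc $e$). The value is $\mathrm{val}(x,z)=\sum_{P\in\mathcal{P}}\big(x_P-\sum_{e\in P}z_{e,P}\big)^+$; the flow player maximizes $\min_{z\in\Omega}\mathrm{val}(x,z)$. For a fixed arc $f$ with $c_f>0$ define $B'=B_I/c_f$, $c'_e=\min\{c_e/c_f,1\}$ for $e\in A$, and $\bar c'_P=\min_{e\in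 P}c'_e$ for $P\in\mathcal{P}$. Then $[\mathrm{LP}_{\mathrm{flow}}(f)]$ is: maximize $\sum_{P\in\mathcal{P}}\bar c'_P x_P-B'$ subject to $\sum_{P\in\mathcal{P}:e\in P}x_P\le u_e$ for all $e\in A$ and $x_P\ge 0$ for all $P\in\mathcal{P}$. *)

theory Defs
  imports Complex_Main
begin

text \<open>Arcs are elements of an abstract type 'a with tail and head maps (parallel arcs allowed).
A path is a nonempty list of arcs whose vertex sequence is simple, starting at s and ending at t;
it is identified with its arc set.\<close>

definition st_path :: "('a \<Rightarrow> 'v) \<Rightarrow> ('a \<Rightarrow> 'v) \<Rightarrow> 'a set \<Rightarrow> 'v \<Rightarrow> 'v \<Rightarrow> 'a list \<Rightarrow> bool" where
  "st_path tail head A s t es \<longleftrightarrow>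
     es \<noteq> [] \<and> set es \<subseteq> A \<and>
     (\<forall>i. Suc i < length es \<longrightarrow> head (es ! i) = tail (es ! Suc i)) \<and>
     tail (es ! 0) = s \<and> head (last es) = t \<and>
     distinct (tail (es ! 0) # map head es)"

definition st_paths :: "('a \<Rightarrow> 'v) \<Rightarrow> ('a \<Rightarrow> 'v) \<Rightarrow> 'a set \<Rightarrow> 'v \<Rightarrow> 'v \<Rightarrow> 'a set set" where
  "st_paths tail head A s t = {set es | es. st_path tail head A s t es}"

definition flows :: "'a set set \<Rightarrow> 'a set \<Rightarrow> ('a \<Rightarrow> real) \<Rightarrow> ('a set \<Rightarrow> real) set" where
  "flows Ps A u = {x. (\<forall>P. P \<notin> Ps \<longrightarrow> x P = 0) \<and> (\<forall>P\<in>Ps. 0 \<le> x P) \<and>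
                      (\<forall>e\<in>A. (\<Sum>P\<in>{P\<in>Ps. e \<in> P}. x P) \<le> u e)}"

definition interdictions :: "'a set set \<Rightarrow> 'a set \<Rightarrow> ('a \<Rightarrow> real) \<Rightarrow> real \<Rightarrow> ('a \<Rightarrow> 'a set \<Rightarrow> real) set" where
  "interdictions Ps A c BI = {z. (\<forall>e P. (e \<notin> A \<or> P \<notin> Ps) \<longrightarrow> z e P = 0) \<and>
                                 (\<forall>e\<in>A. \<forall>P\<in>Ps. 0 \<le> z e P) \<and>
                                 (\<Sum>e\<in>A. c e * (\<Sum>P\<in>{P\<in>Ps. e \<in> P}. z e P)) \<le> BI}"

definition val :: "'a set set \<Rightarrow> ('a set \<Rightarrow> real) \<Rightarrow> ('a \<Rightarrow> 'a set \<Rightarrow> real) \<Rightarrow> real" where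
  "val Ps x z = (\<Sum>P\<in>Ps. max 0 (x P - (\<Sum>e\<in>P. z e P)))"

definition worst_val :: "'a set set \<Rightarrow> 'a set \<Rightarrow> ('a \<Rightarrow> real) \<Rightarrow> real \<Rightarrow> ('a set \<Rightarrow> real) \<Rightarrow> real" where
  "worst_val Ps A c BI x = (INF z\<in>interdictions Ps A c BI. val Ps x z)"

definition lp_obj :: "'a set set \<Rightarrow> ('a \<Rightarrow> real) \<Rightarrow> real \<Rightarrow> 'a \<Rightarrow> ('a set \<Rightarrow> real) \<Rightarrow> real" where
  "lp_obj Ps c BI f x =
     (let c' = (\<lambda>e. min (c e / c f) 1); B' = BI / c f
      in (\<Sum>P\<in>Ps. Min (c' ` P) * x P) - B')"

definition lp_optimal :: "'a set set \<Rightarrow> 'a set \<Rightarrow> ('a \<Rightarrow> real) \<Rightarrow> ('a \<Rightarrow> real) \<Rightarrow> real \<Rightarrow> 'a \<Rightarrow> ('a set \<Rightarrow> real) \<Rightarrow> bool" where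
  "lp_optimal Ps A u c BI f x \<longleftrightarrow> x \<in> flows Ps A u \<and>
     (\<forall>y\<in>flows Ps A u. lp_obj Ps c BI f y \<le> lp_obj Ps c BI f x)"

end

theory Submission
  imports Defs
begin

text \<open>Let \<open>k P = Min (c ` P)\<close> be the cheapest interdiction cost on a path. Stealing at the
cheapest arc is never worse, so the interdictor solves a fractional knapsack: remove \<open>r P \<le> x P\<close>
from each path subject to \<open>\<Sum>P. k P * r P \<le> B\<^sub>I\<close>. For every \<open>\<tau> = c f > 0\<close>,
\<open>min (k P / \<tau>) 1 * r P \<le> k P * r P / \<tau>\<close> shows that at least the objective of LP_flow(f)
survives. Conversely, the greedy interdiction that removes the cheapest paths first leaves exactly
that objective for \<open>\<tau>\<close> the cost level at which the budget runs out (or leaves nothing). So every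
flow guarantees at most the largest LP optimum, and the flow attaining it guarantees that much.\<close>

lemma sum_interdiction_cost_by_path:
  fixes c :: "'a \<Rightarrow> real" and z :: "'a \<Rightarrow> 'a set \<Rightarrow> real"
  assumes "finite A" "finite Ps" "\<forall>P\<in>Ps. P \<subseteq> A"
  shows "(\<Sum>e\<in>A. c e * (\<Sum>P\<in>{P\<in>Ps. e \<in> P}. z e P)) = (\<Sum>P\<in>Ps. \<Sum>e\<in>P. c e * z e P)"
proof -
  have "(\<Sum>e\<in>A. c e * (\<Sum>P\<in>{P\<in>Ps. e \<in> P}. z e P)) = (\<Sum>e\<in>A. \<Sum>P\<in>{P\<in>Ps. e \<in> P}. c e * z e P)"
    by (simp add: sum_distrib_left)
  also have "\<dots> = (\<Sum>P\<in>Ps. \<Sum>e\<in>{e\<in>A. e \<in> P}. c e * z e P)"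
    by (rule sum.swap_restrict[OF assms(1,2)])
  also have "\<dots> = (\<Sum>P\<in>Ps. \<Sum>e\<in>P. c e * z e P)"
    using assms(3) by (intro sum.cong refl) (simp add: Collect_conj_eq Int_absorb1)
  finally show ?thesis .
qed

lemma Min_image_min_divide:
  fixes c :: "'a \<Rightarrow> real"
  assumes "finite P" "P \<noteq> {}" "0 < d"
  shows "Min ((\<lambda>e. min (c e / d) 1) ` P) = min (Min (c ` P) / d) 1"
proof -
  have "mono (\<lambda>v::real. min (v / d) 1)"
    using assms(3) by (intro monoI) (simp add: divide_right_mono min.coboundedI1)
  then have "min (Min (c ` P) / d) 1 = Min ((\<lambda>v. min (v / d) 1) ` c ` P)"
    by (rule mono_Min_commute) (use assms in auto)
  then show ?thesis by (simp add: image_image)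
qed

lemma lp_obj_eq:
  assumes "finite A" "\<forall>P\<in>Ps. P \<subseteq> A \<and> P \<noteq> {}" "0 < c f"
  shows "lp_obj Ps c BI f x = (\<Sum>P\<in>Ps. min (Min (c ` P) / c f) 1 * x P) - BI / c f"
proof -
  have "Min ((\<lambda>e. min (c e / c f) 1) ` P) = min (Min (c ` P) / c f) 1" if "P \<in> Ps" for P
    using that assms finite_subset by (intro Min_image_min_divide) auto
  then show ?thesis unfolding lp_obj_def Let_def by (simp cong: sum.cong)
qed

lemma val_nonneg: "0 \<le> val Ps x z"
  unfolding val_def by (intro sum_nonneg) auto

lemma zero_in_interdictions: "0 \<le> BI \<Longrightarrow> (\<lambda>e P. 0) \<in> interdictions Ps A c BI"
  unfolding interdictions_def by auto

lemma worst_val_le_val: "z \<in> interdictions Ps A c BI \<Longrightarrow> worst_val Ps A c BI x \<le> val Ps x z"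
  unfolding worst_val_def
  by (rule cINF_lower) (auto intro!: bdd_belowI2[where m=0] val_nonneg)

lemma worst_val_nonneg: "0 \<le> BI \<Longrightarrow> 0 \<le> worst_val Ps A c BI x"
  unfolding worst_val_def
  by (rule cINF_greatest) (auto intro: val_nonneg zero_in_interdictions)

lemma scaled_diff_le_pos_part:
  fixes a X W C :: real
  assumes "0 \<le> a" "a \<le> 1" "a * W \<le> C"
  shows "a * X - C \<le> max 0 (X - W)"
proof -
  have "a * (X - W) \<le> max 0 (X - W)"
    using assms(1,2) by (cases "0 \<le> X - W") (auto simp: mult_left_le_one_le mult_nonneg_nonpos)
  then show ?thesis using assms(3) by (simp add: algebra_simps)
qed

lemma lp_obj_le_worst_val:
  fixes c :: "'a \<Rightarrow> real"
  assumes fA: "finite A" and fP: "finite Ps" and PA: "\<forall>P\<in>Ps. P \<subseteq> A \<and> P \<noteq> {}"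
    and c0: "\<forall>e\<in>A. 0 \<le> c e" and cf: "0 < c f" and B0: "0 \<le> BI"
  shows "lp_obj Ps c BI f x \<le> worst_val Ps A c BI x"
  unfolding worst_val_def
proof (rule cINF_greatest)
  show "interdictions Ps A c BI \<noteq> {}" using zero_in_interdictions[OF B0] by blast
next
  fix z assume z: "z \<in> interdictions Ps A c BI"
  define a where "a P = min (Min (c ` P) / c f) 1" for P
  have cost: "(\<Sum>P\<in>Ps. \<Sum>e\<in>P. c e * z e P) \<le> BI"
    using z sum_interdiction_cost_by_path[OF fA fP, of c z] PA unfolding interdictions_def by auto
  have path_bound: "a P * x P - (\<Sum>e\<in>P. c e * z e P) / c f \<le> max 0 (x P - (\<Sum>e\<in>P. z e P))"
    if P: "P \<in> Ps" for P
  proof (rule scaled_diff_le_pos_part)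
    have finP: "finite P" and PsA: "P \<subseteq> A" using P PA fA finite_subset by auto
    then have "0 \<le> Min (c ` P)" using P PA c0 by (auto simp: Min_ge_iff)
    then show "0 \<le> a P" "a P \<le> 1" unfolding a_def using cf by auto
    have "a P * z e P \<le> c e * z e P / c f" if e: "e \<in> P" for e
    proof -
      have "a P \<le> c e / c f"
        using finP e cf unfolding a_def by (simp add: min.coboundedI1 divide_right_mono)
      moreover have "0 \<le> z e P" using z e P PsA unfolding interdictions_def by auto
      ultimately show ?thesis by (metis mult_right_mono times_divide_eq_left)
    qed
    then show "a P * (\<Sum>e\<in>P. z e P) \<le> (\<Sum>e\<in>P. c e * z e P) / c f"
      by (simp add: sum_distrib_left sum_divide_distrib sum_mono)
  qed
  have "lp_obj Ps c BI f x = (\<Sum>P\<in>Ps. a P * x P) - BI / c f"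
    unfolding a_def using lp_obj_eq[where c=c and f=f, OF fA PA cf] .
  also have "\<dots> \<le> (\<Sum>P\<in>Ps. a P * x P) - (\<Sum>P\<in>Ps. \<Sum>e\<in>P. c e * z e P) / c f"
    using cost cf by (simp add: divide_right_mono)
  also have "\<dots> = (\<Sum>P\<in>Ps. a P * x P - (\<Sum>e\<in>P. c e * z e P) / c f)"
    by (simp add: sum_subtractf sum_divide_distrib)
  also have "\<dots> \<le> val Ps x z"
    unfolding val_def by (rule sum_mono) (rule path_bound)
  finally show "lp_obj Ps c BI f x \<le> val Ps x z" .
qed

lemma interdiction_at_cheapest_arcs:
  fixes c :: "'a \<Rightarrow> real" and r :: "'a set \<Rightarrow> real"
  assumes fA: "finite A" and fP: "finite Ps" and PA: "\<forall>P\<in>Ps. P \<subseteq> A \<and> P \<noteq> {}"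
    and r0: "\<forall>P\<in>Ps. 0 \<le> r P" and cost: "(\<Sum>P\<in>Ps. Min (c ` P) * r P) \<le> BI"
  shows "\<exists>z \<in> interdictions Ps A c BI. \<forall>P\<in>Ps. (\<Sum>e\<in>P. z e P) = r P"
proof -
  have fin: "finite P" if "P \<in> Ps" for P using that PA fA finite_subset by auto
  define cheapest where "cheapest P = (SOME e. e \<in> P \<and> c e = Min (c ` P))" for P
  have cheapest: "cheapest P \<in> P \<and> c (cheapest P) = Min (c ` P)" if "P \<in> Ps" for P
  proof -
    have "Min (c ` P) \<in> c ` P" using that fin PA by simp
    then have "\<exists>e. e \<in> P \<and> c e = Min (c ` P)" by auto
    then show ?thesis unfolding cheapest_def by (rule someI_ex)
  qed
  define z where "z e P = (if P \<in> Ps \<and> e = cheapest P then r P else 0)" for e P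
  have stolen: "(\<Sum>e\<in>P. z e P) = r P" if "P \<in> Ps" for P
    using that cheapest[OF that] fin[OF that] by (simp add: z_def)
  have path_cost: "(\<Sum>e\<in>P. c e * z e P) = Min (c ` P) * r P" if "P \<in> Ps" for P
  proof -
    have "(\<Sum>e\<in>P. c e * z e P) = (\<Sum>e\<in>P. if e = cheapest P then c e * r P else 0)"
      using that by (intro sum.cong) (auto simp: z_def)
    then show ?thesis using cheapest[OF that] fin[OF that] by simp
  qed
  have "z \<in> interdictions Ps A c BI"
    unfolding interdictions_def
  proof (intro CollectI conjI allI ballI impI)
    fix e P assume "e \<notin> A \<or> P \<notin> Ps"
    then show "z e P = 0" using cheapest PA unfolding z_def by auto
  next
    fix e P assume "e \<in> A" "P \<in> Ps"
    then show "0 \<le> z e P" using r0 unfolding z_def by simp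
  next
    have "(\<Sum>e\<in>A. c e * (\<Sum>P\<in>{P\<in>Ps. e \<in> P}. z e P)) = (\<Sum>P\<in>Ps. Min (c ` P) * r P)"
      using sum_interdiction_cost_by_path[OF fA fP] PA path_cost by simp
    then show "(\<Sum>e\<in>A. c e * (\<Sum>P\<in>{P\<in>Ps. e \<in> P}. z e P)) \<le> BI" using cost by simp
  qed
  then show ?thesis using stolen by blast
qed

lemma worst_val_le_residual:
  fixes c :: "'a \<Rightarrow> real" and y r :: "'a set \<Rightarrow> real"
  assumes "finite A" "finite Ps" "\<forall>P\<in>Ps. P \<subseteq> A \<and> P \<noteq> {}"
    and "\<forall>P\<in>Ps. 0 \<le> r P \<and> r P \<le> y P" and "(\<Sum>P\<in>Ps. Min (c ` P) * r P) \<le> BI"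
  shows "worst_val Ps A c BI y \<le> (\<Sum>P\<in>Ps. y P - r P)"
proof -
  obtain z where z: "z \<in> interdictions Ps A c BI" "\<forall>P\<in>Ps. (\<Sum>e\<in>P. z e P) = r P"
    using interdiction_at_cheapest_arcs[OF assms(1-3) _ assms(5)] assms(4) by blast
  have "val Ps y z = (\<Sum>P\<in>Ps. y P - r P)"
    unfolding val_def using z(2) assms(4) by (intro sum.cong) auto
  then show ?thesis using worst_val_le_val[OF z(1), of y] by simp
qed

lemma knapsack_threshold_exists:
  fixes k y :: "'i \<Rightarrow> real"
  assumes fI: "finite I" and k0: "\<forall>i\<in>I. 0 \<le> k i" and B0: "0 \<le> B"
    and over: "B < (\<Sum>i\<in>I. k i * y i)"
  shows "\<exists>\<tau>\<in>k ` I. 0 < \<tau> \<and> (\<Sum>i\<in>{i\<in>I. k i < \<tau>}. k i * y i) \<le> B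
                     \<and> B < (\<Sum>i\<in>{i\<in>I. k i \<le> \<tau>}. k i * y i)"
proof -
  define F where "F v = (\<Sum>i\<in>{i\<in>I. k i \<le> v}. k i * y i)" for v
  define S where "S = {v\<in>k ` I. B < F v}"
  have "I \<noteq> {}" using over B0 by auto
  then have "Max (k ` I) \<in> S"
    using over fI unfolding S_def F_def by (simp add: Collect_conj_eq Int_absorb2 subset_eq)
  then have fin_S: "finite S" and ne_S: "S \<noteq> {}" unfolding S_def using fI by auto
  define \<tau> where "\<tau> = Min S"
  have \<tau>S: "\<tau> \<in> S" unfolding \<tau>_def using fin_S ne_S by simp
  have "0 < \<tau>"
  proof (rule ccontr)
    assume "\<not> 0 < \<tau>"
    then have "F \<tau> = 0" unfolding F_def using k0 by (intro sum.neutral) force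
    then show False using \<tau>S B0 unfolding S_def by simp
  qed
  moreover have "(\<Sum>i\<in>{i\<in>I. k i < \<tau>}. k i * y i) \<le> B"
  proof (cases "{i\<in>I. k i < \<tau>} = {}")
    case False
    define m where "m = Max (k ` {i\<in>I. k i < \<tau>})"
    have "m \<in> k ` {i\<in>I. k i < \<tau>}" unfolding m_def using False fI by (intro Max_in) auto
    then have m: "m \<in> k ` I" "m < \<tau>" by auto
    then have "m \<notin> S" using fin_S unfolding \<tau>_def by (meson Min_le not_le)
    moreover have "{i\<in>I. k i \<le> m} = {i\<in>I. k i < \<tau>}"
      using m fI unfolding m_def by (auto intro: Max_ge)
    ultimately show ?thesis using m unfolding S_def F_def by auto
  qed (simp only: B0 sum.empty)
  ultimately show ?thesis using \<tau>S unfolding S_def F_def by blast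
qed

text \<open>Interdict the items below the threshold completely and the fraction \<open>\<theta>\<close> of those at the
threshold that exhausts the budget.\<close>

lemma knapsack_threshold_residual:
  fixes k y :: "'i \<Rightarrow> real"
  assumes fI: "finite I" and y0: "\<forall>i\<in>I. 0 \<le> y i" and \<tau>: "0 < \<tau>"
    and below: "(\<Sum>i\<in>{i\<in>I. k i < \<tau>}. k i * y i) \<le> B"
    and above: "B < (\<Sum>i\<in>{i\<in>I. k i \<le> \<tau>}. k i * y i)"
  shows "\<exists>r. (\<forall>i\<in>I. 0 \<le> r i \<and> r i \<le> y i) \<and> (\<Sum>i\<in>I. k i * r i) = B
             \<and> (\<Sum>i\<in>I. y i - r i) = (\<Sum>i\<in>I. min (k i / \<tau>) 1 * y i) - B / \<tau>"
proof -
  define L where "L = (\<Sum>i\<in>{i\<in>I. k i < \<tau>}. k i * y i)"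
  define Y where "Y = (\<Sum>i\<in>{i\<in>I. k i = \<tau>}. y i)"
  have split: "{i\<in>I. k i \<le> \<tau>} = {i\<in>I. k i < \<tau>} \<union> {i\<in>I. k i = \<tau>}" by auto
  have "(\<Sum>i\<in>{i\<in>I. k i \<le> \<tau>}. k i * y i) = L + (\<Sum>i\<in>{i\<in>I. k i = \<tau>}. k i * y i)"
    unfolding L_def split using fI by (intro sum.union_disjoint) auto
  also have "(\<Sum>i\<in>{i\<in>I. k i = \<tau>}. k i * y i) = \<tau> * Y"
    unfolding Y_def sum_distrib_left by (rule sum.cong) auto
  finally have gap: "0 \<le> B - L" "B - L < \<tau> * Y" using below above unfolding L_def by auto
  define \<theta> where "\<theta> = (B - L) / (\<tau> * Y)"
  have \<theta>: "0 \<le> \<theta>" "\<theta> \<le> 1" "\<theta> * (\<tau> * Y) = B - L" unfolding \<theta>_def using gap by auto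
  define r where "r i = (if k i < \<tau> then y i else if k i = \<tau> then \<theta> * y i else 0)" for i
  have r_bounds: "\<forall>i\<in>I. 0 \<le> r i \<and> r i \<le> y i"
    using y0 \<theta> unfolding r_def by (auto simp: mult_left_le_one_le)
  have "(\<Sum>i\<in>I. k i * r i)
        = (\<Sum>i\<in>I. (if k i < \<tau> then k i * y i else 0) + \<theta> * \<tau> * (if k i = \<tau> then y i else 0))"
    unfolding r_def by (rule sum.cong) auto
  also have "\<dots> = L + \<theta> * \<tau> * Y"
    unfolding L_def Y_def using fI by (simp add: sum.distrib sum_distrib_left sum.inter_filter)
  finally have spent: "(\<Sum>i\<in>I. k i * r i) = B" using \<theta>(3) by (simp add: algebra_simps)
  have "y i - r i = min (k i / \<tau>) 1 * y i - k i * r i / \<tau>" for i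
    using \<tau> unfolding r_def by (auto simp: min_def field_simps)
  then have "(\<Sum>i\<in>I. y i - r i) = (\<Sum>i\<in>I. min (k i / \<tau>) 1 * y i) - (\<Sum>i\<in>I. k i * r i) / \<tau>"
    by (simp add: sum_subtractf sum_divide_distrib)
  then show ?thesis using r_bounds spent by auto
qed

lemma worst_val_le_lp_obj:
  fixes c :: "'a \<Rightarrow> real" and y :: "'a set \<Rightarrow> real"
  assumes fA: "finite A" and fP: "finite Ps" and PA: "\<forall>P\<in>Ps. P \<subseteq> A \<and> P \<noteq> {}"
    and c0: "\<forall>e\<in>A. 0 \<le> c e" and B0: "0 \<le> BI" and y0: "\<forall>P\<in>Ps. 0 \<le> y P"
  shows "worst_val Ps A c BI y \<le> 0 \<or> (\<exists>f\<in>A. 0 < c f \<and> worst_val Ps A c BI y \<le> lp_obj Ps c BI f y)"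
proof (cases "(\<Sum>P\<in>Ps. Min (c ` P) * y P) \<le> BI")
  case True
  then show ?thesis using worst_val_le_residual[OF fA fP PA, of y y] y0 by simp
next
  case False
  have fin: "finite P" "P \<noteq> {}" if "P \<in> Ps" for P using that PA fA finite_subset by auto
  have k0: "\<forall>P\<in>Ps. 0 \<le> Min (c ` P)"
    using PA c0 fin by (auto simp: Min_ge_iff)
  from False have "BI < (\<Sum>P\<in>Ps. Min (c ` P) * y P)" by simp
  then obtain \<tau> where \<tau>: "\<tau> \<in> (\<lambda>P. Min (c ` P)) ` Ps" "0 < \<tau>"
    "(\<Sum>P\<in>{P\<in>Ps. Min (c ` P) < \<tau>}. Min (c ` P) * y P) \<le> BI"
    "BI < (\<Sum>P\<in>{P\<in>Ps. Min (c ` P) \<le> \<tau>}. Min (c ` P) * y P)"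
    using knapsack_threshold_exists[OF fP k0 B0] by blast
  obtain r where r: "\<forall>P\<in>Ps. 0 \<le> r P \<and> r P \<le> y P" "(\<Sum>P\<in>Ps. Min (c ` P) * r P) = BI"
    "(\<Sum>P\<in>Ps. y P - r P) = (\<Sum>P\<in>Ps. min (Min (c ` P) / \<tau>) 1 * y P) - BI / \<tau>"
    using knapsack_threshold_residual[OF fP y0 \<tau>(2-4)] by blast
  obtain P where P: "P \<in> Ps" "\<tau> = Min (c ` P)" using \<tau>(1) by blast
  moreover have "Min (c ` P) \<in> c ` P" using fin[OF P(1)] by simp
  ultimately obtain f where f: "f \<in> P" "c f = \<tau>" by auto
  have "worst_val Ps A c BI y \<le> lp_obj Ps c BI f y"
    using worst_val_le_residual[OF fA fP PA r(1)] r(2,3) lp_obj_eq[OF fA PA, of c f] f \<tau>(2) by simp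
  moreover have "f \<in> A" using f P PA by auto
  ultimately show ?thesis using f \<tau>(2) by auto
qed

lemma st_paths_finite_nonempty_arcs:
  assumes "finite A"
  shows "finite (st_paths tail head A s t)" "\<forall>P\<in>st_paths tail head A s t. P \<subseteq> A \<and> P \<noteq> {}"
proof -
  have "st_paths tail head A s t \<subseteq> Pow A" unfolding st_paths_def st_path_def by auto
  then show "finite (st_paths tail head A s t)" using assms finite_subset by blast
  show "\<forall>P\<in>st_paths tail head A s t. P \<subseteq> A \<and> P \<noteq> {}" unfolding st_paths_def st_path_def by auto
qed

theorem theorem1:
  fixes V :: "'v set" and A :: "'a set" and tail head :: "'a \<Rightarrow> 'v" and s t :: 'v
    and u c :: "'a \<Rightarrow> real" and BI :: real
    and xf :: "'a \<Rightarrow> 'a set \<Rightarrow> real" and fstar :: 'a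
  assumes "finite V" "finite A" "\<forall>e\<in>A. tail e \<in> V \<and> head e \<in> V" "s \<in> V" "t \<in> V"
    and "\<forall>e\<in>A. 0 \<le> u e" "\<forall>e\<in>A. 0 \<le> c e" "0 \<le> BI"
    and "\<exists>e\<in>A. 0 < c e"
    and "\<forall>f\<in>A. 0 < c f \<longrightarrow> lp_optimal (st_paths tail head A s t) A u c BI f (xf f)"
    and "fstar \<in> A" "0 < c fstar"
    and "\<forall>f\<in>A. 0 < c f \<longrightarrow>
           lp_obj (st_paths tail head A s t) c BI f (xf f)
             \<le> lp_obj (st_paths tail head A s t) c BI fstar (xf fstar)"
  shows "xf fstar \<in> flows (st_paths tail head A s t) A u \<and>
         (\<forall>y\<in>flows (st_paths tail head A s t) A u.
            worst_val (st_paths tail head A s t) A c BI y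
              \<le> worst_val (st_paths tail head A s t) A c BI (xf fstar))"
proof -
  define Ps where "Ps = st_paths tail head A s t"
  note paths = st_paths_finite_nonempty_arcs[OF assms(2), of tail head s t, folded Ps_def]
  have lp_opt: "lp_optimal Ps A u c BI f (xf f)" if "f \<in> A" "0 < c f" for f
    using assms(10) that unfolding Ps_def by blast
  have lower: "lp_obj Ps c BI fstar (xf fstar) \<le> worst_val Ps A c BI (xf fstar)"
    using lp_obj_le_worst_val[OF assms(2) paths assms(7,12,8)] .
  have "worst_val Ps A c BI y \<le> worst_val Ps A c BI (xf fstar)" if y: "y \<in> flows Ps A u" for y
  proof -
    have "\<forall>P\<in>Ps. 0 \<le> y P" using y unfolding flows_def by blast
    then consider "worst_val Ps A c BI y \<le> 0"
      | f where "f \<in> A" "0 < c f" "worst_val Ps A c BI y \<le> lp_obj Ps c BI f y"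
      using worst_val_le_lp_obj[OF assms(2) paths assms(7,8)] by blast
    then show ?thesis
    proof cases
      case 1
      then show ?thesis using worst_val_nonneg[OF assms(8)] order_trans by blast
    next
      case (2 f)
      then have "worst_val Ps A c BI y \<le> lp_obj Ps c BI f (xf f)"
        using lp_opt y unfolding lp_optimal_def by fastforce
      also have "\<dots> \<le> lp_obj Ps c BI fstar (xf fstar)" using assms(13) 2 unfolding Ps_def by blast
      finally show ?thesis using lower by linarith
    qed
  qed
  then show ?thesis using lp_opt[OF assms(11,12)] unfolding lp_optimal_def Ps_def by blast
qed

end
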